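(* Let $p$ be a prime and $A_*$ a graded commutative $\mathbb F_p$-algebra. (1) The kernel $G_p^{ab}(A_* )$ of $\rho_0:G_p(A_* )\to G_p^{\langle1\rangle}(A_* )$ is the subgroup $\{\alpha(X)=X+\sum_{i\ge1}\alpha_iX^{p^i}\in G_p(A_* )\mid\alpha_i^p=0\text{ for }i\ge1\}$. (2) The kernel $G_p^{[1]}(A_* )$ of $\rho_1:G_p^{\langle1\rangle}(A_* )\to G_p^{\langle2\rangle}(A_* )$ is the subgroup $\{\alpha(X)=\alpha_0X+\sum_{i\ge1}\alpha_iX^{p^i}\in G_p^{\langle1\rangle}(A_* )\mid\alpha_i^p=0\text{ for }i\ge1\}$. (3) For $k\ge2$, the kernel $G_p^{[k]}(A_* )$ of $\rho_k:G_p^{\langle k\rangle}(A_* )\to G_p^{\langle k+1\rangle}(A_* )$ is the subgroup $\{\alpha(X)=X+\sum_{i\ge1}\alpha_iX^{p^i}\in G_p^{\langle k\rangle}(A_* )\mid\alpha_i^p=0\text{ for }i\ge1\}$.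
   Context: Graded commutative means $ab=(-1)^{\deg a\deg b}ba$. $G_p(A_* )$: for $p=2$ the power series $\sum_{i\ge0}\alpha_iX^{2^i}\in A_*[[X]]$ ($\deg X=-1$) with $\alpha_i\in A_{2^i-1}$, $\alpha_0=1$; for $p$ odd ($\deg\epsilon=-1$, $\epsilon^2=0$, $\deg X=-2$) the series $\sum_{i\ge0}\alpha_iX^{p^i}$ with $\alpha_i\in A_*[\epsilon]/(\epsilon^2)$ of degree $2(p^i-1)$, $\alpha_0-1\in(\epsilon)$; product $\alpha\cdot\beta=\beta(\alpha(X))$. $G_p^{\langle k\rangle}(A_* )$, $k\ge1$: for $p=2$ or $k\ge2$, series $\sum_{i\ge0}\alpha_iX^{p^i}\in A_*[[X]]$ with $\deg\alpha_i=2^{i+k}-2^k$ (resp. $2(p^{i+k}-p^k)$), $\alpha_0=1$, product $\beta(\alpha(X))$; for $p$ odd and $k=1$, series $\sum_{i\ge0}\alpha_iX^{p^i}$ ($\deg X=-2p$) with $\alpha_0\in A_*[\epsilon]/(\epsilon^2)$, $\alpha_0-1\in(\epsilon)$, $\alpha_i\in A_*$ of degree $2(p^{i+1}-p)$ for $i\ge1$, product $\hat q(\beta(\alpha(X)))$ where $\hat q(\sum\gamma_iX^{p^i})=\gamma_0X+\sum_{i\ge1}q(\gamma_i)X^{p^i}$ and $q$ sets $\epsilon=0$. $\rho_0(\sum\alpha_iX^{p^i})=\alpha_0X+\sum_{i\ge1}\alpha_i^pX^{p^i}$ and, for $k\ge1$, $\rho_k(\sum\alpha_iX^{p^i})=X+\sum_{i\ge1}\alpha_i^pX^{p^i}$.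 (For $p=2$ read $p^i$ as $2^i$.) *)

theory Defs
  imports Main "HOL-Computational_Algebra.Primes"
begin

text \<open>A graded F_p-algebra A_* is modelled by a ring type 'a (the total algebra)
together with its homogeneous components A n, n :: int.\<close>

definition graded_comm_Fp_algebra :: "nat \<Rightarrow> (int \<Rightarrow> 'a::ring_1 set) \<Rightarrow> bool" where
  "graded_comm_Fp_algebra p A \<longleftrightarrow>
     (\<forall>n. 0 \<in> A n \<and> (\<forall>x\<in>A n. \<forall>y\<in>A n. x + y \<in> A n \<and> - x \<in> A n)) \<and>
     (\<forall>m n. \<forall>x\<in>A m. \<forall>y\<in>A n. x * y \<in> A (m + n)) \<and>
     1 \<in> A 0 \<and>
     (\<forall>m n. \<forall>x\<in>A m. \<forall>y\<in>A n. x * y = (if even (m * n) then y * x else - (y * x))) \<and>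
     (\<forall>x. \<exists>f S. finite S \<and> (\<forall>n\<in>S. f n \<in> A n) \<and> x = sum f S) \<and>
     (\<forall>f S. finite S \<longrightarrow> (\<forall>n\<in>S. f n \<in> A n) \<longrightarrow> sum f S = 0 \<longrightarrow> (\<forall>n\<in>S. f n = 0)) \<and>
     of_nat p = (0::'a)"

definition grade_inv :: "(int \<Rightarrow> 'a::ring_1 set) \<Rightarrow> 'a \<Rightarrow> 'a" where
  "grade_inv A x = (THE y. \<exists>f S. finite S \<and> (\<forall>n\<in>S. f n \<in> A n) \<and> x = sum f S \<and>
        y = (\<Sum>n\<in>S. if even n then f n else - f n))"

text \<open>An element a + b eps is represented by the pair (a, b) (eps written on the right).
Since eps c = grade_inv c eps and eps^2 = 0,
 (a + b eps)(c + d eps) = a c + (a d + b grade_inv(c)) eps.  A_* embeds as (a, 0).\<close>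

definition eps_mult :: "(int \<Rightarrow> 'a::ring_1 set) \<Rightarrow> 'a \<times> 'a \<Rightarrow> 'a \<times> 'a \<Rightarrow> 'a \<times> 'a" where
  "eps_mult A u v = (fst u * fst v, fst u * snd v + snd u * grade_inv A (fst v))"

primrec eps_pow :: "(int \<Rightarrow> 'a::ring_1 set) \<Rightarrow> 'a \<times> 'a \<Rightarrow> nat \<Rightarrow> 'a \<times> 'a" where
  "eps_pow A u 0 = (1, 0)"
| "eps_pow A u (Suc n) = eps_mult A u (eps_pow A u n)"

definition eps_hom :: "(int \<Rightarrow> 'a::ring_1 set) \<Rightarrow> int \<Rightarrow> 'a \<times> 'a \<Rightarrow> bool" where
  "eps_hom A m u \<longleftrightarrow> fst u \<in> A m \<and> snd u \<in> A (m + 1)"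

text \<open>A series sum_i alpha_i X^(p^i) is represented by its coefficient sequence
alpha :: nat => 'a x 'a (coefficients in A_*[eps]/(eps^2); coefficients lying in A_*
have zero eps-part).  For p = 2 no eps occurs, so all eps-parts are 0.\<close>

definition Gp :: "nat \<Rightarrow> (int \<Rightarrow> 'a::ring_1 set) \<Rightarrow> (nat \<Rightarrow> 'a \<times> 'a) set" where
  "Gp p A = (if p = 2 then
      {\<alpha>. \<alpha> 0 = (1, 0) \<and> (\<forall>i. snd (\<alpha> i) = 0 \<and> fst (\<alpha> i) \<in> A (2 ^ i - 1))}
    else
      {\<alpha>. eps_hom A 0 (\<alpha> 0) \<and> fst (\<alpha> 0) = 1 \<and>
           (\<forall>i. eps_hom A (2 * (int p ^ i - 1)) (\<alpha> i))})"

definition Gk :: "nat \<Rightarrow> nat \<Rightarrow> (int \<Rightarrow> 'a::ring_1 set) \<Rightarrow> (nat \<Rightarrow> 'a \<times> 'a) set" where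
  "Gk p k A = (if p = 2 then
      {\<alpha>. \<alpha> 0 = (1, 0) \<and> (\<forall>i. snd (\<alpha> i) = 0 \<and> fst (\<alpha> i) \<in> A (2 ^ (i + k) - 2 ^ k))}
    else if k \<ge> 2 then
      {\<alpha>. \<alpha> 0 = (1, 0) \<and>
           (\<forall>i. snd (\<alpha> i) = 0 \<and> fst (\<alpha> i) \<in> A (2 * (int p ^ (i + k) - int p ^ k)))}
    else
      {\<alpha>. eps_hom A 0 (\<alpha> 0) \<and> fst (\<alpha> 0) = 1 \<and>
           (\<forall>i\<ge>1. snd (\<alpha> i) = 0 \<and> fst (\<alpha> i) \<in> A (2 * (int p ^ (i + 1) - int p)))})"

definition ser_X :: "nat \<Rightarrow> 'a::ring_1 \<times> 'a" where
  "ser_X = (\<lambda>i. if i = 0 then (1, 0) else (0, 0))"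

definition rho0 :: "nat \<Rightarrow> (int \<Rightarrow> 'a::ring_1 set) \<Rightarrow> (nat \<Rightarrow> 'a \<times> 'a) \<Rightarrow> (nat \<Rightarrow> 'a \<times> 'a)" where
  "rho0 p A \<alpha> = (\<lambda>i. if i = 0 then \<alpha> 0 else eps_pow A (\<alpha> i) p)"

definition rhok :: "nat \<Rightarrow> (nat \<Rightarrow> 'a::ring_1 \<times> 'a) \<Rightarrow> (nat \<Rightarrow> 'a \<times> 'a)" where
  "rhok p \<alpha> = (\<lambda>i. if i = 0 then (1, 0) else (fst (\<alpha> i) ^ p, 0))"

end

theory Submission
  imports Defs
begin

(* Each rho keeps the lowest coefficient (rho_0) or replaces it by 1 (rho_k) and raises
   the others to the p-th power, so its kernel is read off coefficientwise. *)

lemma eq_ser_X_iff: "f = ser_X \<longleftrightarrow> f 0 = (1, 0) \<and> (\<forall>i\<ge>1. f i = (0, 0))"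
  by (auto simp: ser_X_def fun_eq_iff)

lemma rho0_eq_ser_X_iff:
  "rho0 p A \<alpha> = ser_X \<longleftrightarrow> \<alpha> 0 = (1, 0) \<and> (\<forall>i\<ge>1. eps_pow A (\<alpha> i) p = (0, 0))"
  by (auto simp: eq_ser_X_iff rho0_def)

lemma rhok_eq_ser_X_iff: "rhok p \<alpha> = ser_X \<longleftrightarrow> (\<forall>i\<ge>1. fst (\<alpha> i) ^ p = 0)"
  by (auto simp: eq_ser_X_iff rhok_def)

lemma Gk_coeff0:
  assumes "\<alpha> \<in> Gk p k A" and "k \<ge> 2"
  shows "\<alpha> 0 = (1, 0)"
  using assms by (auto simp: Gk_def split: if_splits)

theorem proposition4p4:
  fixes p :: nat and A :: "int \<Rightarrow> 'a::ring_1 set"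
  assumes "prime p" and "graded_comm_Fp_algebra p A"
  shows "({\<alpha> \<in> Gp p A. rho0 p A \<alpha> = ser_X} =
           {\<alpha> \<in> Gp p A. \<alpha> 0 = (1, 0) \<and> (\<forall>i\<ge>1. eps_pow A (\<alpha> i) p = (0, 0))}) \<and>
         ({\<alpha> \<in> Gk p 1 A. rhok p \<alpha> = ser_X} =
           {\<alpha> \<in> Gk p 1 A. \<forall>i\<ge>1. fst (\<alpha> i) ^ p = 0}) \<and>
         (\<forall>k\<ge>2. {\<alpha> \<in> Gk p k A. rhok p \<alpha> = ser_X} =
           {\<alpha> \<in> Gk p k A. \<alpha> 0 = (1, 0) \<and> (\<forall>i\<ge>1. fst (\<alpha> i) ^ p = 0)})"
  using Gk_coeff0 by (auto simp: rho0_eq_ser_X_iff rhok_eq_ser_X_iff)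

end
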